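(* For the anonymous MIS algorithm described in the context, under the adversarial distributed daemon and from any initial configuration, the execution reaches a stable configuration (one in which no rule is enabled on any node) with probability $1$, whatever the strategy of the daemon.
   Context: $G=(V,E)$ is a finite simple undirected graph; $N(u)$ is the open neighbourhood of $u$. Nodes are anonymous. A configuration assigns to each node $u$ a value $s_u\in\{\bot,\top\}$. A rule "guard $\to$ command" is enabled on $u$ in $\gamma$ if its guard holds there. A transition $\gamma\xrightarrow{t}\gamma'$ is given by a nonempty set $t$ of moves $(u,r)$ with $r$ enabled on $u$ in $\gamma$, at most one per node, all executed simultaneously from the values in $\gamma$ with independent random choices; other nodes keep their values. An execution is a sequence of consecutive transitions, stopping only at a stable configuration. The adversarial distributed daemon may choose, at each step and depending on the whole past, any valid nonempty set $t$ (no fairness constraint). The algorithm has the rules: (Candidacy) $s_u=\bot\wedge\forall v\in N(u),\ s_v=\bot\ \to\ s_u:=\top$. (Withdrawal?) $s_u=\top\wedge\exists v\in N(u),\ s_v=\top\ \to$ with probability $\frac12$ (independently) set $s_u:=\bot$, otherwise leave it unchanged. *)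

theory Defs
  imports "HOL-Probability.Probability"
begin

text \<open>Graph: finite vertex type 'v, adjacency relation adj (assumed symmetric, irreflexive).
  Configuration: 'v \<Rightarrow> bool, where True encodes top and False encodes bot.\<close>

type_synonym 'v cfg = "'v \<Rightarrow> bool"

definition cand_en :: "('v \<Rightarrow> 'v \<Rightarrow> bool) \<Rightarrow> 'v cfg \<Rightarrow> 'v \<Rightarrow> bool" where
  "cand_en adj c u \<longleftrightarrow> \<not> c u \<and> (\<forall>v. adj u v \<longrightarrow> \<not> c v)"

definition wd_en :: "('v \<Rightarrow> 'v \<Rightarrow> bool) \<Rightarrow> 'v cfg \<Rightarrow> 'v \<Rightarrow> bool" where
  "wd_en adj c u \<longleftrightarrow> c u \<and> (\<exists>v. adj u v \<and> c v)"

definition enabled :: "('v \<Rightarrow> 'v \<Rightarrow> bool) \<Rightarrow> 'v cfg \<Rightarrow> 'v \<Rightarrow> bool" where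
  "enabled adj c u \<longleftrightarrow> cand_en adj c u \<or> wd_en adj c u"

definition stable :: "('v \<Rightarrow> 'v \<Rightarrow> bool) \<Rightarrow> 'v cfg \<Rightarrow> bool" where
  "stable adj c \<longleftrightarrow> (\<forall>u. \<not> enabled adj c u)"

text \<open>One transition: the set T of activated nodes execute their enabled rule
  simultaneously; coin u = True means the Withdrawal coin says "set to bot".\<close>
definition step :: "('v \<Rightarrow> 'v \<Rightarrow> bool) \<Rightarrow> 'v cfg \<Rightarrow> 'v set \<Rightarrow> ('v \<Rightarrow> bool) \<Rightarrow> 'v cfg" where
  "step adj c T coin = (\<lambda>u.
     if u \<in> T \<and> cand_en adj c u then True
     else if u \<in> T \<and> wd_en adj c u then \<not> coin u
     else c u)"

text \<open>A daemon strategy maps the whole history of configurations (oldest first,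
  last element = current configuration) to the set of activated nodes.\<close>
definition valid_daemon :: "('v \<Rightarrow> 'v \<Rightarrow> bool) \<Rightarrow> ('v cfg list \<Rightarrow> 'v set) \<Rightarrow> bool" where
  "valid_daemon adj \<sigma> \<longleftrightarrow>
     (\<forall>h. h \<noteq> [] \<and> \<not> stable adj (last h) \<longrightarrow>
          \<sigma> h \<noteq> {} \<and> \<sigma> h \<subseteq> {u. enabled adj (last h) u})"

definition coin_space :: "(nat \<times> 'v \<Rightarrow> bool) measure" where
  "coin_space = PiM UNIV (\<lambda>_. measure_pmf (bernoulli_pmf (1/2)))"

text \<open>History of the execution after n steps; once stable, it stays (execution stopped).\<close>
fun hist :: "('v \<Rightarrow> 'v \<Rightarrow> bool) \<Rightarrow> ('v cfg list \<Rightarrow> 'v set) \<Rightarrow> 'v cfg \<Rightarrow>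
             (nat \<times> 'v \<Rightarrow> bool) \<Rightarrow> nat \<Rightarrow> 'v cfg list" where
  "hist adj \<sigma> c0 \<omega> 0 = [c0]"
| "hist adj \<sigma> c0 \<omega> (Suc n) =
     (let h = hist adj \<sigma> c0 \<omega> n; c = last h in
      if stable adj c then h @ [c]
      else h @ [step adj c (\<sigma> h) (\<lambda>u. \<omega> (n, u))])"

definition config :: "('v \<Rightarrow> 'v \<Rightarrow> bool) \<Rightarrow> ('v cfg list \<Rightarrow> 'v set) \<Rightarrow> 'v cfg \<Rightarrow>
             (nat \<times> 'v \<Rightarrow> bool) \<Rightarrow> nat \<Rightarrow> 'v cfg" where
  "config adj \<sigma> c0 \<omega> n = last (hist adj \<sigma> c0 \<omega> n)"

end

theory Submission
  imports Defs "HOL-Library.Cardinality"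
begin

text \<open>Rank the \<open>n\<close> nodes by an injection into \<open>\<nat>\<close> and let an activated withdrawing
  node drop out exactly when it has a top neighbour that is either not activated or of higher
  rank. Under these coin outcomes no connected component of the top nodes disappears, a
  candidate creates a new component, and without candidates the activated node of least rank
  drops out. So the number of components never decreases and otherwise the number of top
  nodes decreases: a lexicographic potential bounded by \<open>K = n (n + 2)\<close> strictly decreases
  until the configuration is stable. Whatever the daemon does, each block of \<open>K\<close> rounds
  therefore stabilizes with probability at least \<open>1 / 2 ^ (n K)\<close>, and the execution stays
  unstable for \<open>m\<close> blocks with probability at most \<open>(1 - 1 / 2 ^ (n K)) ^ m\<close>.\<close>

definition withdraw_coins ::
    "('v::countable \<Rightarrow> 'v \<Rightarrow> bool) \<Rightarrow> 'v cfg \<Rightarrow> 'v set \<Rightarrow> 'v \<Rightarrow> bool"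
where
  "withdraw_coins adj c T u \<longleftrightarrow> (\<exists>w. adj u w \<and> c w \<and> (w \<notin> T \<or> to_nat u < to_nat w))"

definition top_edges :: "('v \<Rightarrow> 'v \<Rightarrow> bool) \<Rightarrow> 'v cfg \<Rightarrow> ('v \<times> 'v) set" where
  "top_edges adj c = {(u, v). c u \<and> c v \<and> adj u v}"

definition top_components :: "('v \<Rightarrow> 'v \<Rightarrow> bool) \<Rightarrow> 'v cfg \<Rightarrow> 'v set set" where
  "top_components adj c = {u. c u} // (top_edges adj c)\<^sup>*"

definition potential :: "('v::finite \<Rightarrow> 'v \<Rightarrow> bool) \<Rightarrow> 'v cfg \<Rightarrow> nat" where
  "potential adj c = (CARD('v) - card (top_components adj c)) * (CARD('v) + 1) + card {u. c u}"

lemma top_edges_rtrancl_top: "(a, b) \<in> (top_edges adj c)\<^sup>* \<Longrightarrow> c a \<Longrightarrow> c b"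
  by (induction rule: rtrancl_induct) (auto simp: top_edges_def)

lemma equiv_top_edges_rtrancl:
  assumes "\<And>u v. adj u v \<Longrightarrow> adj v u"
  shows "equiv UNIV ((top_edges adj c)\<^sup>*)"
proof -
  have "sym (top_edges adj c)" using assms unfolding sym_def top_edges_def by auto
  then show ?thesis by (simp add: equiv_def refl_rtrancl sym_rtrancl trans_rtrancl)
qed

lemma card_top_components_le: "card (top_components adj (c :: 'v::finite cfg)) \<le> CARD('v)"
proof -
  have "top_components adj c = (\<lambda>u. (top_edges adj c)\<^sup>* `` {u}) ` {u. c u}"
    unfolding top_components_def quotient_def by auto
  then have "card (top_components adj c) \<le> card {u. c u}"
    by (simp add: card_image_le)
  also have "\<dots> \<le> CARD('v)" by (rule card_mono) auto
  finally show ?thesis .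
qed

lemma potential_le: "potential adj (c :: 'v::finite cfg) \<le> CARD('v) * (CARD('v) + 2)"
proof -
  have "card {u. c u} \<le> CARD('v)" by (rule card_mono) auto
  moreover have
    "(CARD('v) - card (top_components adj c)) * (CARD('v) + 1) \<le> CARD('v) * (CARD('v) + 1)"
    by (intro mult_right_mono) auto
  ultimately show ?thesis unfolding potential_def by (simp add: algebra_simps)
qed

lemma potential_less:
  fixes c c' :: "'v::finite cfg"
  assumes "card (top_components adj c) \<le> card (top_components adj c')"
    and "card (top_components adj c) < card (top_components adj c')
      \<or> card {u. c' u} < card {u. c u}"
  shows "potential adj c' < potential adj c"
  using assms
proof (elim disjE)
  define N where "N = CARD('v)"
  have "card (top_components adj c') \<le> N" "card {u. c' u} \<le> N"
    unfolding N_def by (auto intro: card_top_components_le card_mono)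
  moreover assume "card (top_components adj c) < card (top_components adj c')"
  ultimately have "N - card (top_components adj c') + 1 \<le> N - card (top_components adj c)"
    by linarith
  then have "(N - card (top_components adj c') + 1) * (N + 1)
      \<le> (N - card (top_components adj c)) * (N + 1)"
    by (rule mult_right_mono) simp
  with \<open>card {u. c' u} \<le> N\<close> show ?thesis unfolding potential_def N_def by simp
qed (unfold potential_def, intro add_le_less_mono mult_right_mono diff_le_mono2, auto)

lemma top_component_eq_class:
  assumes "\<And>u v. adj u v \<Longrightarrow> adj v u" and "Q \<in> top_components adj c" and "s \<in> Q"
  shows "Q = (top_edges adj c)\<^sup>* `` {s}" and "c s"
proof -
  obtain x where "Q = (top_edges adj c)\<^sup>* `` {x}" and "c x"
    using assms(2) unfolding top_components_def by (auto elim: quotientE)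
  with assms(3) have "(x, s) \<in> (top_edges adj c)\<^sup>*" by simp
  with \<open>Q = _\<close> \<open>c x\<close> show "Q = (top_edges adj c)\<^sup>* `` {s}" and "c s"
    using equiv_class_eq[OF equiv_top_edges_rtrancl[OF assms(1)]] top_edges_rtrancl_top by simp_all
qed

locale withdraw_coins_step =
  fixes adj :: "'v::finite \<Rightarrow> 'v \<Rightarrow> bool" and c :: "'v cfg" and T :: "'v set"
  assumes adj_sym: "adj u v \<Longrightarrow> adj v u"
    and adj_irrefl: "\<not> adj u u"
    and T_enabled: "T \<subseteq> {u. enabled adj c u}"
begin

definition c' :: "'v cfg" where
  "c' = step adj c T (withdraw_coins adj c T)"

definition candidates :: "'v set" where
  "candidates = {u \<in> T. cand_en adj c u}"

abbreviation R :: "('v \<times> 'v) set" where "R \<equiv> (top_edges adj c)\<^sup>*"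
abbreviation R' :: "('v \<times> 'v) set" where "R' \<equiv> (top_edges adj c')\<^sup>*"

lemma equiv_R: "equiv UNIV R" and equiv_R': "equiv UNIV R'"
  using adj_sym by (auto intro: equiv_top_edges_rtrancl)

lemma c'_iff: "c' u \<longleftrightarrow> (c u \<and> \<not> (u \<in> T \<and> withdraw_coins adj c T u)) \<or> u \<in> candidates"
proof (cases "u \<in> T")
  case True
  then have "enabled adj c u" using T_enabled by auto
  with True show ?thesis
    unfolding c'_def step_def candidates_def enabled_def cand_en_def wd_en_def by auto
qed (auto simp: c'_def step_def candidates_def)

lemma candidate_not_top: "u \<in> candidates \<Longrightarrow> \<not> c u"
  unfolding candidates_def cand_en_def by auto

lemma candidate_neighbour_not_top: "u \<in> candidates \<Longrightarrow> adj v u \<Longrightarrow> \<not> c v"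
  unfolding candidates_def cand_en_def using adj_sym by auto

lemma R'_from_top: "(a, b) \<in> R' \<Longrightarrow> c a \<Longrightarrow> (a, b) \<in> R"
proof (induction rule: rtrancl_induct)
  case (step b d)
  then have "(a, b) \<in> R" and "c b" by (auto intro: top_edges_rtrancl_top)
  moreover from step.hyps(2) have "c' d" and "adj b d" by (auto simp: top_edges_def)
  ultimately have "c d" using c'_iff candidate_neighbour_not_top by blast
  with \<open>c b\<close> \<open>adj b d\<close> have "(b, d) \<in> top_edges adj c" by (simp add: top_edges_def)
  with \<open>(a, b) \<in> R\<close> show ?case by (rule rtrancl_into_rtrancl)
qed simp

lemma R'_from_candidate: "(a, b) \<in> R' \<Longrightarrow> a \<in> candidates \<Longrightarrow> b \<in> candidates"
proof (induction rule: rtrancl_induct)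
  case (step b d)
  then have "b \<in> candidates" "c' d" "adj b d" by (auto simp: top_edges_def)
  then show ?case using c'_iff candidate_neighbour_not_top adj_sym by blast
qed simp

text \<open>The top node of largest rank in a component keeps its value: a witness for its
  withdrawal is a top neighbour in the same component, hence of smaller rank, hence outside
  \<open>T\<close>, and such a node stays top.\<close>
lemma top_component_survives: "c u \<Longrightarrow> \<exists>s. (u, s) \<in> R \<and> c' s"
proof -
  assume "c u"
  define Q where "Q = R `` {u}"
  have fin: "finite (to_nat ` Q)" by simp
  have "Max (to_nat ` Q) \<in> to_nat ` Q" using fin by (intro Max_in) (auto simp: Q_def)
  then obtain m where "m \<in> Q" and m_def: "to_nat m = Max (to_nat ` Q)" by (metis imageE)
  have m_max: "to_nat q \<le> to_nat m" if "q \<in> Q" for q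
    using Max_ge[OF fin] that unfolding m_def by simp
  have Q_top: "c q" if "q \<in> Q" for q
    using that \<open>c u\<close> top_edges_rtrancl_top unfolding Q_def by fastforce
  show ?thesis
  proof (cases "m \<in> T \<and> withdraw_coins adj c T m")
    case True
    then obtain w where w: "adj m w" "c w" "w \<notin> T \<or> to_nat m < to_nat w"
      unfolding withdraw_coins_def by auto
    have "(m, w) \<in> top_edges adj c" using w Q_top[OF \<open>m \<in> Q\<close>] by (simp add: top_edges_def)
    then have "w \<in> Q" using \<open>m \<in> Q\<close> unfolding Q_def by (auto intro: rtrancl_into_rtrancl)
    with w m_max have "c' w" using c'_iff by fastforce
    with \<open>w \<in> Q\<close> show ?thesis unfolding Q_def by auto
  next
    case False
    then have "c' m" using c'_iff Q_top[OF \<open>m \<in> Q\<close>] by auto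
    with \<open>m \<in> Q\<close> show ?thesis unfolding Q_def by auto
  qed
qed

lemma top_components_embed:
  obtains F where "inj_on F (top_components adj c)"
    and "F ` top_components adj c \<subseteq> {X \<in> top_components adj c'. X \<inter> candidates = {}}"
proof -
  have "\<forall>Q \<in> top_components adj c. \<exists>s. s \<in> Q \<and> c' s"
    using top_component_survives unfolding top_components_def quotient_def by blast
  from bchoice[OF this] obtain s where s_Q: "\<forall>Q \<in> top_components adj c. s Q \<in> Q \<and> c' (s Q)" ..
  note s = s_Q[rule_format]
  have class_s: "Q = R `` {s Q}" and top_s: "c (s Q)" if "Q \<in> top_components adj c" for Q
    using top_component_eq_class[OF adj_sym that] s[OF that] by blast+
  define F where "F Q = R' `` {s Q}" for Q
  show thesis
  proof
    show "inj_on F (top_components adj c)"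
    proof (rule inj_onI)
      fix Q1 Q2 assume Q: "Q1 \<in> top_components adj c" "Q2 \<in> top_components adj c" "F Q1 = F Q2"
      then have "R' `` {s Q1} = R' `` {s Q2}" unfolding F_def by simp
      then have "(s Q1, s Q2) \<in> R'" by (rule eq_equiv_class[OF _ equiv_R' UNIV_I])
      then have "(s Q1, s Q2) \<in> R" using R'_from_top top_s[OF Q(1)] by blast
      then show "Q1 = Q2" using class_s[OF Q(1)] class_s[OF Q(2)] equiv_class_eq[OF equiv_R] by simp
    qed
    have "F Q \<in> top_components adj c' \<and> F Q \<inter> candidates = {}"
      if Q: "Q \<in> top_components adj c" for Q
    proof
      show "F Q \<in> top_components adj c'"
        using s[OF Q] unfolding F_def top_components_def by (auto intro: quotientI)
      show "F Q \<inter> candidates = {}"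
      proof (rule equals0I)
        fix y assume "y \<in> F Q \<inter> candidates"
        moreover have "sym R'" using equiv_R' by (simp add: equiv_def)
        ultimately have "(y, s Q) \<in> R'" and "y \<in> candidates"
          unfolding F_def by (auto dest: symD)
        then show False using R'_from_candidate candidate_not_top top_s[OF Q] by blast
      qed
    qed
    then show "F ` top_components adj c \<subseteq> {X \<in> top_components adj c'. X \<inter> candidates = {}}"
      by blast
  qed
qed

lemma card_top_components_mono: "card (top_components adj c) \<le> card (top_components adj c')"
proof -
  obtain F where "inj_on F (top_components adj c)"
    and "F ` top_components adj c \<subseteq> {X \<in> top_components adj c'. X \<inter> candidates = {}}"
    by (rule top_components_embed)
  then have "card (F ` top_components adj c) \<le> card (top_components adj c')"
    by (intro card_mono) auto
  with \<open>inj_on F _\<close> show ?thesis by (simp add: card_image)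
qed

lemma card_top_components_strict_mono:
  assumes "candidates \<noteq> {}"
  shows "card (top_components adj c) < card (top_components adj c')"
proof -
  obtain F where F_inj: "inj_on F (top_components adj c)"
    and F_into: "F ` top_components adj c \<subseteq> {X \<in> top_components adj c'. X \<inter> candidates = {}}"
    by (rule top_components_embed)
  obtain x where "x \<in> candidates" using assms by auto
  then have "c' x" using c'_iff by auto
  define X where "X = R' `` {x}"
  have "X \<in> top_components adj c'"
    unfolding X_def top_components_def by (rule quotientI) (simp add: \<open>c' x\<close>)
  moreover have "X \<notin> F ` top_components adj c"
    using F_into \<open>x \<in> candidates\<close> unfolding X_def by blast
  ultimately have "card (insert X (F ` top_components adj c)) \<le> card (top_components adj c')"
    using F_into by (intro card_mono) auto
  with \<open>X \<notin> F ` top_components adj c\<close> F_inj show ?thesis by (simp add: card_image)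
qed

text \<open>Without candidates, the activated node of least rank withdraws: any top neighbour
  has a different rank, hence either lies outside \<open>T\<close> or has higher rank.\<close>
lemma tops_shrink:
  assumes "candidates = {}" and "T \<noteq> {}"
  shows "{u. c' u} \<subset> {u. c u}"
proof -
  have fin: "finite (to_nat ` T)" by simp
  have "Min (to_nat ` T) \<in> to_nat ` T" using fin assms(2) by (intro Min_in) auto
  then obtain u where "u \<in> T" and u_def: "to_nat u = Min (to_nat ` T)" by (metis imageE)
  have u_min: "to_nat u \<le> to_nat q" if "q \<in> T" for q
    using Min_le[OF fin] that unfolding u_def by simp
  have "wd_en adj c u"
    using \<open>u \<in> T\<close> T_enabled assms(1) unfolding enabled_def candidates_def by auto
  then obtain w where "c u" "adj u w" "c w" unfolding wd_en_def by auto
  then have "to_nat w \<noteq> to_nat u" using adj_irrefl by auto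
  then have "w \<notin> T \<or> to_nat u < to_nat w" using u_min[of w] by linarith
  with \<open>adj u w\<close> \<open>c w\<close> have "withdraw_coins adj c T u" unfolding withdraw_coins_def by blast
  with \<open>u \<in> T\<close> have "\<not> c' u" using c'_iff assms(1) by simp
  moreover have "c v" if "c' v" for v using that c'_iff assms(1) by simp
  ultimately show ?thesis using \<open>c u\<close> by blast
qed

end

lemma potential_step_less:
  fixes adj :: "'v::finite \<Rightarrow> 'v \<Rightarrow> bool"
  assumes "\<forall>u v. adj u v \<longleftrightarrow> adj v u" and "\<forall>u. \<not> adj u u"
    and "T \<noteq> {}" and "T \<subseteq> {u. enabled adj c u}"
  shows "potential adj (step adj c T (withdraw_coins adj c T)) < potential adj c"
proof -
  interpret withdraw_coins_step adj c T using assms by unfold_locales auto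
  have "card {u. c' u} < card {u. c u}" if "candidates = {}"
    using tops_shrink[OF that assms(3)] by (simp add: psubset_card_mono)
  then show ?thesis unfolding c'_def[symmetric]
    using card_top_components_mono card_top_components_strict_mono by (intro potential_less) auto
qed

definition extend_hist ::
    "('v \<Rightarrow> 'v \<Rightarrow> bool) \<Rightarrow> ('v cfg list \<Rightarrow> 'v set) \<Rightarrow> 'v cfg list \<Rightarrow> ('v \<Rightarrow> bool) \<Rightarrow> 'v cfg list"
where
  "extend_hist adj \<sigma> h r =
     (if stable adj (last h) then h @ [last h] else h @ [step adj (last h) (\<sigma> h) r])"

fun run ::
    "('v \<Rightarrow> 'v \<Rightarrow> bool) \<Rightarrow> ('v cfg list \<Rightarrow> 'v set) \<Rightarrow> 'v cfg list \<Rightarrow> ('v \<Rightarrow> bool) list \<Rightarrow> 'v cfg list"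
where
  "run adj \<sigma> h [] = h"
| "run adj \<sigma> h (r # rs) = run adj \<sigma> (extend_hist adj \<sigma> h r) rs"

definition coin_prefix :: "(nat \<times> 'v \<Rightarrow> bool) \<Rightarrow> nat \<Rightarrow> ('v \<Rightarrow> bool) list" where
  "coin_prefix \<omega> n = map (\<lambda>i u. \<omega> (i, u)) [0..<n]"

definition unstable_runs ::
    "('v \<Rightarrow> 'v \<Rightarrow> bool) \<Rightarrow> ('v cfg list \<Rightarrow> 'v set) \<Rightarrow> nat \<Rightarrow> 'v cfg list \<Rightarrow> ('v \<Rightarrow> bool) list set"
where
  "unstable_runs adj \<sigma> k h = {rs. length rs = k \<and> \<not> stable adj (last (run adj \<sigma> h rs))}"

lemma extend_hist_not_Nil: "extend_hist adj \<sigma> h r \<noteq> []"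
  by (simp add: extend_hist_def)

lemma run_snoc: "run adj \<sigma> h (rs @ [r]) = extend_hist adj \<sigma> (run adj \<sigma> h rs) r"
  by (induction rs arbitrary: h) auto

lemma hist_eq_run: "hist adj \<sigma> c0 \<omega> n = run adj \<sigma> [c0] (coin_prefix \<omega> n)"
  by (induction n) (simp_all add: coin_prefix_def run_snoc extend_hist_def Let_def)

lemma last_run_stable: "stable adj (last h) \<Longrightarrow> last (run adj \<sigma> h rs) = last h"
  by (induction rs arbitrary: h) (simp_all add: extend_hist_def)

lemma finite_unstable_runs: "finite (unstable_runs adj \<sigma> k (h :: 'v::finite cfg list))"
proof -
  have "finite {rs :: ('v \<Rightarrow> bool) list. set rs \<subseteq> UNIV \<and> length rs = k}"
    by (rule finite_lists_length_eq) simp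
  then show ?thesis unfolding unstable_runs_def by (rule finite_subset[rotated]) auto
qed

lemma unstable_runs_0: "unstable_runs adj \<sigma> 0 h = (if stable adj (last h) then {} else {[]})"
  by (auto simp: unstable_runs_def)

lemma unstable_runs_of_stable: "stable adj (last h) \<Longrightarrow> unstable_runs adj \<sigma> k h = {}"
  by (simp add: unstable_runs_def last_run_stable)

lemma card_unstable_runs_Suc:
  "card (unstable_runs adj \<sigma> (Suc k) (h :: 'v::finite cfg list))
     = (\<Sum>r\<in>UNIV. card (unstable_runs adj \<sigma> k (extend_hist adj \<sigma> h r)))"
proof -
  have "unstable_runs adj \<sigma> (Suc k) h = (\<Union>r. (#) r ` unstable_runs adj \<sigma> k (extend_hist adj \<sigma> h r))"
    by (auto simp: unstable_runs_def length_Suc_conv image_iff)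
  also have "card \<dots> = (\<Sum>r\<in>UNIV. card ((#) r ` unstable_runs adj \<sigma> k (extend_hist adj \<sigma> h r)))"
    by (rule card_UN_disjoint) (auto simp: finite_unstable_runs)
  finally show ?thesis by (simp add: card_image)
qed

lemma card_unstable_runs_add_le:
  fixes h :: "'v::finite cfg list"
  assumes "\<And>h'. h' \<noteq> [] \<Longrightarrow> card (unstable_runs adj \<sigma> b h') \<le> M" and "h \<noteq> []"
  shows "card (unstable_runs adj \<sigma> (a + b) h) \<le> card (unstable_runs adj \<sigma> a h) * M"
  using assms(2)
proof (induction a arbitrary: h)
  case 0
  then show ?case using assms(1) by (simp add: unstable_runs_0 unstable_runs_of_stable)
next
  case (Suc a)
  have "card (unstable_runs adj \<sigma> (Suc a + b) h)
      = (\<Sum>r\<in>UNIV. card (unstable_runs adj \<sigma> (a + b) (extend_hist adj \<sigma> h r)))"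
    by (simp add: card_unstable_runs_Suc)
  also have "\<dots> \<le> (\<Sum>r\<in>UNIV. card (unstable_runs adj \<sigma> a (extend_hist adj \<sigma> h r)) * M)"
    by (intro sum_mono Suc.IH extend_hist_not_Nil)
  also have "\<dots> = card (unstable_runs adj \<sigma> (Suc a) h) * M"
    by (simp add: card_unstable_runs_Suc sum_distrib_right)
  finally show ?case .
qed

lemma card_unstable_runs_mult_le:
  fixes h :: "'v::finite cfg list"
  assumes "\<And>h'. h' \<noteq> [] \<Longrightarrow> card (unstable_runs adj \<sigma> k h') \<le> M" and "h \<noteq> []"
  shows "card (unstable_runs adj \<sigma> (m * k) h) \<le> M ^ m"
  using assms(2)
proof (induction m arbitrary: h)
  case 0
  then show ?case by (simp add: unstable_runs_0)
next
  case (Suc m)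
  have "card (unstable_runs adj \<sigma> (k + m * k) h) \<le> card (unstable_runs adj \<sigma> k h) * M ^ m"
    using Suc by (intro card_unstable_runs_add_le)
  also have "\<dots> \<le> M * M ^ m"
    using assms(1)[OF Suc.prems] by simp
  finally show ?case by simp
qed

lemma potential_extend_hist_less:
  fixes adj :: "'v::finite \<Rightarrow> 'v \<Rightarrow> bool"
  assumes "\<forall>u v. adj u v \<longleftrightarrow> adj v u" and "\<forall>u. \<not> adj u u" and "valid_daemon adj \<sigma>"
    and "h \<noteq> []" and "\<not> stable adj (last h)"
  shows "potential adj (last (extend_hist adj \<sigma> h (withdraw_coins adj (last h) (\<sigma> h))))
    < potential adj (last h)"
proof -
  have "\<sigma> h \<noteq> {}" and "\<sigma> h \<subseteq> {u. enabled adj (last h) u}"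
    using assms(3-5) unfolding valid_daemon_def by auto
  with assms(1,2,5) show ?thesis
    unfolding extend_hist_def by (simp add: potential_step_less)
qed

lemma exists_stabilizing_run:
  fixes adj :: "'v::finite \<Rightarrow> 'v \<Rightarrow> bool"
  assumes "\<forall>u v. adj u v \<longleftrightarrow> adj v u" and "\<forall>u. \<not> adj u u" and "valid_daemon adj \<sigma>"
  shows "h \<noteq> [] \<Longrightarrow> potential adj (last h) \<le> k
    \<Longrightarrow> \<exists>rs. length rs = k \<and> stable adj (last (run adj \<sigma> h rs))"
proof (induction k arbitrary: h)
  case 0
  then have "stable adj (last h)"
    using potential_extend_hist_less[OF assms] by fastforce
  then show ?case by (intro exI[of _ "[]"]) simp
next
  case (Suc k)
  show ?case
  proof (cases "stable adj (last h)")
    case True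
    then show ?thesis using last_run_stable[OF True] by (metis length_replicate)
  next
    case False
    define r where "r = withdraw_coins adj (last h) (\<sigma> h)"
    have "potential adj (last (extend_hist adj \<sigma> h r)) \<le> k"
      using potential_extend_hist_less[OF assms Suc.prems(1) False] Suc.prems(2)
      unfolding r_def by simp
    then obtain rs where "length rs = k" "stable adj (last (run adj \<sigma> (extend_hist adj \<sigma> h r) rs))"
      using Suc.IH[OF extend_hist_not_Nil] by blast
    then show ?thesis by (intro exI[of _ "r # rs"]) simp
  qed
qed

lemma card_unstable_runs_less:
  fixes adj :: "'v::finite \<Rightarrow> 'v \<Rightarrow> bool"
  assumes "\<forall>u v. adj u v \<longleftrightarrow> adj v u" and "\<forall>u. \<not> adj u u" and "valid_daemon adj \<sigma>"
    and "h \<noteq> []" and "potential adj (last h) \<le> k"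
  shows "card (unstable_runs adj \<sigma> k h) < 2 ^ (k * CARD('v))"
proof -
  obtain rs where "length rs = k" "stable adj (last (run adj \<sigma> h rs))"
    using exists_stabilizing_run[OF assms] by blast
  then have "unstable_runs adj \<sigma> k h \<subset> {rs :: ('v \<Rightarrow> bool) list. set rs \<subseteq> UNIV \<and> length rs = k}"
    unfolding unstable_runs_def by auto
  then have "card (unstable_runs adj \<sigma> k h)
      < card {rs :: ('v \<Rightarrow> bool) list. set rs \<subseteq> UNIV \<and> length rs = k}"
    by (intro psubset_card_mono finite_lists_length_eq) simp
  also have "\<dots> = CARD('v \<Rightarrow> bool) ^ k"
    by (rule card_lists_length_eq) simp
  also have "\<dots> = 2 ^ (k * CARD('v))"
    by (simp add: card_fun power_mult[symmetric] mult.commute)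
  finally show ?thesis .
qed

lemma length_coin_prefix [simp]: "length (coin_prefix \<omega> n) = n"
  by (simp add: coin_prefix_def)

lemma prob_space_coin_space: "prob_space coin_space"
  unfolding coin_space_def by (intro prob_space_PiM prob_space_measure_pmf)

lemma space_coin_space: "space coin_space = UNIV"
  by (simp add: coin_space_def space_PiM)

definition coin_cylinder :: "('v \<Rightarrow> bool) list \<Rightarrow> (nat \<times> 'v \<Rightarrow> bool) set" where
  "coin_cylinder rs = {\<omega>. coin_prefix \<omega> (length rs) = rs}"

lemma mem_coin_cylinder:
  "\<omega> \<in> coin_cylinder rs \<longleftrightarrow> (\<forall>j \<in> {..<length rs} \<times> UNIV. \<omega> j = (rs ! fst j) (snd j))"
proof -
  have "\<omega> \<in> coin_cylinder rs \<longleftrightarrow> (\<forall>i<length rs. (\<lambda>u. \<omega> (i, u)) = rs ! i)"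
    unfolding coin_cylinder_def coin_prefix_def list_eq_iff_nth_eq by simp
  also have "\<dots> \<longleftrightarrow> (\<forall>j \<in> {..<length rs} \<times> UNIV. \<omega> j = (rs ! fst j) (snd j))"
    by (auto simp: fun_eq_iff)
  finally show ?thesis .
qed

lemma coin_cylinder_eq_prod_emb:
  "coin_cylinder rs =
     prod_emb UNIV (\<lambda>_. measure_pmf (bernoulli_pmf (1/2))) ({..<length rs} \<times> UNIV)
       (PiE ({..<length rs} \<times> UNIV) (\<lambda>j. {(rs ! fst j) (snd j)}))"
  by (rule set_eqI) (simp add: mem_coin_cylinder prod_emb_def restrict_PiE_iff Pi_iff)

lemma sets_coin_cylinder: "coin_cylinder (rs :: ('v::finite \<Rightarrow> bool) list) \<in> sets coin_space"
  unfolding coin_cylinder_eq_prod_emb coin_space_def by (rule sets_PiM_I) auto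

lemma measure_coin_cylinder:
  "measure coin_space (coin_cylinder (rs :: ('v::finite \<Rightarrow> bool) list))
     = 1 / 2 ^ (length rs * CARD('v))"
proof -
  have "emeasure coin_space (coin_cylinder rs)
      = (\<Prod>j\<in>{..<length rs} \<times> (UNIV :: 'v set).
           emeasure (measure_pmf (bernoulli_pmf (1/2))) {(rs ! fst j) (snd j)})"
    unfolding coin_space_def coin_cylinder_eq_prod_emb
    by (rule emeasure_PiM_emb) (auto simp: prob_space_measure_pmf)
  also have "\<dots> = (\<Prod>j\<in>{..<length rs} \<times> (UNIV :: 'v set). ennreal (1/2))"
    by (intro prod.cong refl) (auto simp: emeasure_pmf_single pmf_bernoulli_True pmf_bernoulli_False)
  also have "\<dots> = ennreal (\<Prod>j\<in>{..<length rs} \<times> (UNIV :: 'v set). 1/2)"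
    by (rule prod_ennreal) simp
  also have "\<dots> = ennreal (1 / 2 ^ (length rs * CARD('v)))"
    by (simp add: card_cartesian_product power_one_over)
  finally show ?thesis by (intro measure_eq_emeasure_eq_ennreal) auto
qed

lemma unstable_event_eq:
  "{\<omega> \<in> space coin_space. \<not> stable adj (config adj \<sigma> c0 \<omega> n)}
     = (\<Union>rs \<in> unstable_runs adj \<sigma> n [c0]. coin_cylinder rs)"
  by (auto simp: unstable_runs_def coin_cylinder_def config_def hist_eq_run space_coin_space)

lemma measure_unstable_event:
  fixes adj :: "'v::finite \<Rightarrow> 'v \<Rightarrow> bool"
  shows "measure coin_space {\<omega> \<in> space coin_space. \<not> stable adj (config adj \<sigma> c0 \<omega> n)}
     = card (unstable_runs adj \<sigma> n [c0]) / 2 ^ (n * CARD('v))"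
proof -
  interpret prob_space coin_space by (rule prob_space_coin_space)
  have "disjoint_family_on coin_cylinder (unstable_runs adj \<sigma> n [c0])"
    by (auto simp: disjoint_family_on_def coin_cylinder_def unstable_runs_def)
  then have "measure coin_space (\<Union>rs \<in> unstable_runs adj \<sigma> n [c0]. coin_cylinder rs)
      = (\<Sum>rs \<in> unstable_runs adj \<sigma> n [c0]. measure coin_space (coin_cylinder rs))"
    by (intro finite_measure_finite_Union finite_unstable_runs) (auto intro: sets_coin_cylinder)
  also have "\<dots> = (\<Sum>rs \<in> unstable_runs adj \<sigma> n [c0]. 1 / 2 ^ (n * CARD('v)))"
    by (intro sum.cong refl) (simp add: measure_coin_cylinder unstable_runs_def)
  finally show ?thesis by (simp add: unstable_event_eq)
qed

lemma sets_unstable_event: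
  fixes adj :: "'v::finite \<Rightarrow> 'v \<Rightarrow> bool"
  shows "{\<omega> \<in> space coin_space. \<not> stable adj (config adj \<sigma> c0 \<omega> n)} \<in> sets coin_space"
  unfolding unstable_event_eq
  by (intro sets.finite_UN finite_unstable_runs sets_coin_cylinder)

lemma measure_unstable_event_le:
  fixes adj :: "'v::finite \<Rightarrow> 'v \<Rightarrow> bool"
  assumes "\<forall>u v. adj u v \<longleftrightarrow> adj v u" and "\<forall>u. \<not> adj u u" and "valid_daemon adj \<sigma>"
  defines "K \<equiv> CARD('v) * (CARD('v) + 2)"
  shows "measure coin_space {\<omega> \<in> space coin_space. \<not> stable adj (config adj \<sigma> c0 \<omega> (m * K))}
    \<le> (1 - 1 / 2 ^ (K * CARD('v))) ^ m"
proof -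
  define B :: nat where "B = 2 ^ (K * CARD('v))"
  have "card (unstable_runs adj \<sigma> K h) \<le> B - 1" if "h \<noteq> []" for h
    using card_unstable_runs_less[OF assms(1-3) that] potential_le unfolding K_def B_def
    by fastforce
  then have "card (unstable_runs adj \<sigma> (m * K) [c0]) \<le> (B - 1) ^ m"
    by (intro card_unstable_runs_mult_le) auto
  then have "real (card (unstable_runs adj \<sigma> (m * K) [c0])) \<le> (real B - 1) ^ m"
    by (metis B_def of_nat_1 of_nat_diff of_nat_le_iff of_nat_power one_le_numeral one_le_power)
  then have "card (unstable_runs adj \<sigma> (m * K) [c0]) / real B ^ m \<le> ((real B - 1) / real B) ^ m"
    by (simp add: divide_right_mono power_divide B_def)
  also have "(real B - 1) / real B = 1 - 1 / 2 ^ (K * CARD('v))"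
    by (simp add: B_def field_simps)
  also have "real B ^ m = 2 ^ (m * K * CARD('v))"
    by (simp add: B_def power_mult[symmetric] ac_simps)
  finally show ?thesis by (simp only: measure_unstable_event)
qed

theorem mainTheorem18:
  fixes adj :: "'v::finite \<Rightarrow> 'v \<Rightarrow> bool"
    and \<sigma> :: "'v cfg list \<Rightarrow> 'v set"
    and c0 :: "'v cfg"
  assumes "\<forall>u v. adj u v \<longleftrightarrow> adj v u"
    and "\<forall>u. \<not> adj u u"
    and "valid_daemon adj \<sigma>"
  shows "{\<omega> \<in> space coin_space. \<exists>n. stable adj (config adj \<sigma> c0 \<omega> n)} \<in> sets coin_space
       \<and> measure coin_space {\<omega> \<in> space coin_space. \<exists>n. stable adj (config adj \<sigma> c0 \<omega> n)} = 1"
proof -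
  interpret prob_space coin_space by (rule prob_space_coin_space)
  define S where "S = {\<omega> \<in> space coin_space. \<exists>n. stable adj (config adj \<sigma> c0 \<omega> n)}"
  define U where "U n = {\<omega> \<in> space coin_space. \<not> stable adj (config adj \<sigma> c0 \<omega> n)}" for n
  define K where "K = CARD('v) * (CARD('v) + 2)"
  define q :: real where "q = 1 / 2 ^ (K * CARD('v))"
  have S_eq: "S = (\<Union>n. space coin_space - U n)" unfolding S_def U_def by auto
  have U_sets: "U n \<in> events" for n unfolding U_def by (rule sets_unstable_event)
  then have "S \<in> events" unfolding S_eq by auto
  have "1 - (1 - q) ^ m \<le> prob S" for m
  proof -
    have "1 - (1 - q) ^ m \<le> 1 - prob (U (m * K))"
      using measure_unstable_event_le[OF assms] unfolding U_def K_def q_def by simp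
    also have "\<dots> = prob (space coin_space - U (m * K))" by (simp add: prob_compl U_sets)
    also have "\<dots> \<le> prob S" using \<open>S \<in> events\<close> by (intro finite_measure_mono) (auto simp: S_eq)
    finally show ?thesis .
  qed
  moreover have "(\<lambda>m. 1 - (1 - q) ^ m) \<longlonglongrightarrow> 1 - 0"
    by (intro tendsto_diff tendsto_const LIMSEQ_power_zero) (simp add: q_def)
  ultimately have "1 \<le> prob S" by (intro LIMSEQ_le_const2) auto
  with \<open>S \<in> events\<close> show ?thesis unfolding S_def by (simp add: antisym)
qed

end
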